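(* Let $\theta\in(0,\pi)$, $\lambda_0=2\cos\theta$, $\sigma\in[0,1]$, $c_0\ge1$, and let $(\omega_i)_{i\ge1}$ be real numbers with $|\omega_i|\le c_0$ for all $i$. Then for all $k\ge0$, $$\frac{|X_{k+1}-X_k|}{Y_k}\le \frac{\sqrt5}{2}\,\frac{\sigma c_0^2}{\sin^2\theta}.$$
   Context: Let $z=e^{i\theta}$, $T_i=\begin{pmatrix}\lambda_0-\sigma\omega_i&-1\\1&0\end{pmatrix}$, $W_k=T_k\cdots T_1$ ($W_0=I$), and define $X_k,Y_k\in\mathbb{R}$, $Y_k>0$, by $X_k+iY_k=W_k^{-1}\circ z$, where a real $2\times2$ matrix $\begin{pmatrix}a&b\\c&d\end{pmatrix}$ of positive determinant acts on the upper half plane by $w\mapsto\frac{aw+b}{cw+d}$. *)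

theory Defs
  imports "HOL-Analysis.Analysis"
begin

definition Tmat :: "real \<Rightarrow> real \<Rightarrow> (nat \<Rightarrow> real) \<Rightarrow> nat \<Rightarrow> real^2^2" where
  "Tmat \<theta> \<sigma> \<omega> i = (\<chi> r c. if r = 1 then (if c = 1 then 2 * cos \<theta> - \<sigma> * \<omega> i else -1)
                              else (if c = 1 then 1 else 0))"

fun Wmat :: "real \<Rightarrow> real \<Rightarrow> (nat \<Rightarrow> real) \<Rightarrow> nat \<Rightarrow> real^2^2" where
  "Wmat \<theta> \<sigma> \<omega> 0 = mat 1"
| "Wmat \<theta> \<sigma> \<omega> (Suc k) = Tmat \<theta> \<sigma> \<omega> (Suc k) ** Wmat \<theta> \<sigma> \<omega> k"

definition mobius :: "real^2^2 \<Rightarrow> complex \<Rightarrow> complex" where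
  "mobius A w = (of_real (A$1$1) * w + of_real (A$1$2)) / (of_real (A$2$1) * w + of_real (A$2$2))"

definition Zpt :: "real \<Rightarrow> real \<Rightarrow> (nat \<Rightarrow> real) \<Rightarrow> nat \<Rightarrow> complex" where
  "Zpt \<theta> \<sigma> \<omega> k = mobius (matrix_inv (Wmat \<theta> \<sigma> \<omega> k)) (cis \<theta>)"

definition Xk :: "real \<Rightarrow> real \<Rightarrow> (nat \<Rightarrow> real) \<Rightarrow> nat \<Rightarrow> real" where
  "Xk \<theta> \<sigma> \<omega> k = Re (Zpt \<theta> \<sigma> \<omega> k)"

definition Yk :: "real \<Rightarrow> real \<Rightarrow> (nat \<Rightarrow> real) \<Rightarrow> nat \<Rightarrow> real" where
  "Yk \<theta> \<sigma> \<omega> k = Im (Zpt \<theta> \<sigma> \<omega> k)"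

end

theory Submission
  imports Defs
begin

text \<open>
  Both \<open>Z\<^sub>k\<close> and \<open>Z\<^sub>k\<^sub>+\<^sub>1\<close> are images under the same determinant-one Moebius map
  \<open>W\<^sub>k\<^sup>-\<^sup>1\<close>, of \<open>z\<close> and of \<open>w = T\<^sub>k\<^sub>+\<^sub>1\<^sup>-\<^sup>1 z = 1 / (\<lambda>\<^sub>0 - \<sigma>\<omega>\<^sub>k\<^sub>+\<^sub>1 - z)\<close>.
  The quantity \<open>Q(p,q) = |p - q|\<^sup>2 / (Im p Im q)\<close> is Moebius invariant, and since \<open>z\<close> is a
  fixed point of the unperturbed map one finds \<open>Q(w,z) = (\<sigma>\<omega>\<^sub>k\<^sub>+\<^sub>1)\<^sup>2 / sin\<^sup>2 \<theta>\<close>.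
  An elementary estimate \<open>|Re p - Re q| \<le> Im q \<surd>(Q + Q\<^sup>2/4)\<close> then gives the bound.
\<close>

lemma matrix_inv_inverse:
  fixes A :: "'a::field^'n^'n"
  assumes "invertible A"
  shows "A ** matrix_inv A = mat 1" "matrix_inv A ** A = mat 1"
proof -
  have "A ** matrix_inv A = mat 1 \<and> matrix_inv A ** A = mat 1"
    using assms unfolding invertible_def matrix_inv_def by (rule someI_ex)
  then show "A ** matrix_inv A = mat 1" "matrix_inv A ** A = mat 1" by simp_all
qed

lemma matrix_inv_unique:
  fixes A B :: "'a::field^'n^'n"
  assumes "A ** B = mat 1" "B ** A = mat 1"
  shows "matrix_inv A = B"
proof -
  have inv: "invertible A" using assms unfolding invertible_def by blast
  have "matrix_inv A = matrix_inv A ** (A ** B)" using assms by (simp add: matrix_mul_rid)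
  also have "\<dots> = (matrix_inv A ** A) ** B" by (simp add: matrix_mul_assoc)
  also have "\<dots> = B" by (simp add: matrix_inv_inverse(2)[OF inv] matrix_mul_lid)
  finally show ?thesis .
qed

lemma matrix_inv_mult:
  fixes A B :: "'a::field^'n^'n"
  assumes "invertible A" "invertible B"
  shows "matrix_inv (A ** B) = matrix_inv B ** matrix_inv A"
proof (rule matrix_inv_unique)
  note A = matrix_inv_inverse[OF assms(1)] and B = matrix_inv_inverse[OF assms(2)]
  show "A ** B ** (matrix_inv B ** matrix_inv A) = mat 1"
    by (metis A(1) B(1) matrix_mul_assoc matrix_mul_rid)
  show "matrix_inv B ** matrix_inv A ** (A ** B) = mat 1"
    by (metis A(2) B(2) matrix_mul_assoc matrix_mul_rid)
qed

lemma det_matrix_inv: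
  fixes A :: "'a::field^'n^'n"
  assumes "invertible A"
  shows "det (matrix_inv A) = inverse (det A)"
  using det_mul[of A "matrix_inv A"] matrix_inv_inverse(1)[OF assms] assms
  by (simp add: invertible_det_nz field_simps)

lemma mobius_denom_nonzero:
  fixes A :: "real^2^2"
  assumes "det A \<noteq> 0" "Im w \<noteq> 0"
  shows "of_real (A$2$1) * w + of_real (A$2$2) \<noteq> 0"
proof
  assume "of_real (A$2$1) * w + of_real (A$2$2) = 0"
  then have "A$2$1 * Im w = 0" "A$2$1 * Re w + A$2$2 = 0" by (auto simp: complex_eq_iff)
  then have "A$2$1 = 0" "A$2$2 = 0" using assms(2) by auto
  then show False using assms(1) by (simp add: det_2)
qed

lemma Im_mobius:
  fixes A :: "real^2^2"
  shows "Im (mobius A w) = det A * Im w / (cmod (of_real (A$2$1) * w + of_real (A$2$2)))^2"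
  unfolding mobius_def det_2 cmod_power2 by (simp add: Im_divide algebra_simps power2_eq_square)

lemma mobius_diff:
  fixes A :: "real^2^2"
  assumes "det A \<noteq> 0" "Im u \<noteq> 0" "Im v \<noteq> 0"
  shows "mobius A u - mobius A v = of_real (det A) * (u - v)
           / ((of_real (A$2$1) * u + of_real (A$2$2)) * (of_real (A$2$1) * v + of_real (A$2$2)))"
  using mobius_denom_nonzero[OF assms(1,2)] mobius_denom_nonzero[OF assms(1,3)]
  by (simp add: mobius_def det_2 field_simps)

lemma mobius_mult:
  fixes A B :: "real^2^2"
  assumes "det B \<noteq> 0" "Im w \<noteq> 0"
  shows "mobius (A ** B) w = mobius A (mobius B w)"
proof -
  define n where "n = of_real (B$1$1) * w + of_real (B$1$2)"
  define d where "d = of_real (B$2$1) * w + of_real (B$2$2)"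
  have d: "d \<noteq> 0" unfolding d_def by (rule mobius_denom_nonzero[OF assms])
  have "mobius A (mobius B w) = mobius A (n / d)" by (simp add: mobius_def n_def d_def)
  also have "\<dots> = (d * (of_real (A$1$1) * n / d + of_real (A$1$2)))
                    / (d * (of_real (A$2$1) * n / d + of_real (A$2$2)))"
    using d by (simp add: mobius_def)
  also have "\<dots> = (of_real (A$1$1) * n + of_real (A$1$2) * d) / (of_real (A$2$1) * n + of_real (A$2$2) * d)"
    using d by (simp add: distrib_left mult.commute)
  also have "\<dots> = mobius (A ** B) w"
    by (simp add: mobius_def matrix_matrix_mult_def sum_2 n_def d_def algebra_simps)
  finally show ?thesis ..
qed

lemma Im_mobius_pos:
  fixes A :: "real^2^2"
  assumes "det A > 0" "Im w > 0"
  shows "Im (mobius A w) > 0"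
  using mobius_denom_nonzero[of A w] assms by (simp add: Im_mobius)

text \<open>For points of the upper half plane this is \<open>2 (cosh d - 1)\<close>, \<open>d\<close> their hyperbolic distance.\<close>
definition hyperbolic_quotient :: "complex \<Rightarrow> complex \<Rightarrow> real" where
  "hyperbolic_quotient p q = (cmod (p - q))^2 / (Im p * Im q)"

lemma hyperbolic_quotient_mobius:
  fixes A :: "real^2^2"
  assumes "det A \<noteq> 0" "Im u \<noteq> 0" "Im v \<noteq> 0"
  shows "hyperbolic_quotient (mobius A u) (mobius A v) = hyperbolic_quotient u v"
proof -
  define du where "du = cmod (of_real (A$2$1) * u + of_real (A$2$2))"
  define dv where "dv = cmod (of_real (A$2$1) * v + of_real (A$2$2))"
  have "du > 0" "dv > 0"
    using mobius_denom_nonzero[OF assms(1,2)] mobius_denom_nonzero[OF assms(1,3)]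
    by (simp_all add: du_def dv_def)
  moreover have "(cmod (mobius A u - mobius A v))^2 = (det A)^2 * (cmod (u - v))^2 / (du^2 * dv^2)"
    by (simp add: mobius_diff[OF assms] du_def dv_def norm_mult norm_divide power_mult_distrib power_divide)
  ultimately show ?thesis
    using assms unfolding hyperbolic_quotient_def Im_mobius du_def[symmetric] dv_def[symmetric]
    by (simp add: field_simps power2_eq_square)
qed

lemma abs_Re_diff_le:
  assumes "Im p > 0" "Im q > 0"
  shows "\<bar>Re p - Re q\<bar> \<le> Im q * sqrt (hyperbolic_quotient p q + (hyperbolic_quotient p q)^2 / 4)"
proof -
  define x where "x = Re p - Re q"
  define Q where "Q = hyperbolic_quotient p q"
  have Q: "Q = (x^2 + (Im p - Im q)^2) / (Im p * Im q)"
    by (simp add: Q_def x_def hyperbolic_quotient_def cmod_power2)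
  have "(Im q)^2 * (Q + Q^2 / 4) - x^2 = (x^2 + (Im q)^2 - (Im p)^2)^2 / (4 * (Im p)^2)"
    unfolding Q using assms by (simp add: field_simps power2_eq_square)
  moreover have "0 \<le> (x^2 + (Im q)^2 - (Im p)^2)^2 / (4 * (Im p)^2)" by simp
  ultimately have "x^2 \<le> (Im q)^2 * (Q + Q^2 / 4)" by linarith
  then have "\<bar>x\<bar> \<le> sqrt ((Im q)^2 * (Q + Q^2 / 4))"
    using real_sqrt_le_mono by fastforce
  then show ?thesis
    using assms by (simp add: x_def Q_def real_sqrt_mult)
qed

lemma det_Tmat: "det (Tmat \<theta> \<sigma> \<omega> i) = 1"
  by (simp add: det_2 Tmat_def)

lemma det_Wmat: "det (Wmat \<theta> \<sigma> \<omega> k) = 1"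
  by (induction k) (simp_all add: det_mul det_Tmat)

lemma invertible_det_one:
  fixes A :: "'a::field^'n^'n"
  assumes "det A = 1"
  shows "invertible A" "det (matrix_inv A) = 1"
  using assms invertible_det_nz[of A] det_matrix_inv[of A] by simp_all

lemma matrix_inv_Tmat:
  "matrix_inv (Tmat \<theta> \<sigma> \<omega> i)
     = (\<chi> r c. if r = 1 then (if c = 1 then 0 else 1) else (if c = 1 then -1 else 2 * cos \<theta> - \<sigma> * \<omega> i))"
  by (rule matrix_inv_unique)
     (simp_all add: Tmat_def matrix_matrix_mult_def sum_2 mat_def vec_eq_iff forall_2)

lemma mobius_matrix_inv_Tmat:
  "mobius (matrix_inv (Tmat \<theta> \<sigma> \<omega> i)) z = 1 / (of_real (2 * cos \<theta> - \<sigma> * \<omega> i) - z)"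
  by (simp add: matrix_inv_Tmat mobius_def)

lemma Zpt_Suc:
  assumes "sin \<theta> \<noteq> 0"
  shows "Zpt \<theta> \<sigma> \<omega> (Suc k)
           = mobius (matrix_inv (Wmat \<theta> \<sigma> \<omega> k)) (1 / (of_real (2 * cos \<theta> - \<sigma> * \<omega> (Suc k)) - cis \<theta>))"
proof -
  note T = invertible_det_one[OF det_Tmat] and W = invertible_det_one[OF det_Wmat]
  have "Zpt \<theta> \<sigma> \<omega> (Suc k)
          = mobius (matrix_inv (Wmat \<theta> \<sigma> \<omega> k) ** matrix_inv (Tmat \<theta> \<sigma> \<omega> (Suc k))) (cis \<theta>)"
    by (simp add: Zpt_def matrix_inv_mult T(1) W(1))
  also have "\<dots> = mobius (matrix_inv (Wmat \<theta> \<sigma> \<omega> k)) (mobius (matrix_inv (Tmat \<theta> \<sigma> \<omega> (Suc k))) (cis \<theta>))"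
    using assms T(2) by (simp add: mobius_mult)
  finally show ?thesis by (simp add: mobius_matrix_inv_Tmat)
qed

lemma transfer_step_of_cis:
  fixes t e :: real
  assumes "0 < t" "t < pi"
  defines "w \<equiv> 1 / (of_real (2 * cos t - e) - cis t)"
  shows "Im w > 0" "hyperbolic_quotient w (cis t) = e^2 / (sin t)^2"
proof -
  have s: "sin t > 0" using assms sin_gt_zero by blast
  have nz: "of_real (2 * cos t - e) - cis t \<noteq> 0" using s by (auto simp: complex_eq_iff)
  define N where "N = (cmod (of_real (2 * cos t - e) - cis t))^2"
  have N: "N > 0" using nz by (simp add: N_def)
  have Im_w: "Im w = sin t / N"
    by (simp add: w_def Im_divide N_def cmod_power2)
  then show "Im w > 0" using s N by simp
  \<comment> \<open>\<open>cis t\<close> is a fixed point of the unperturbed map \<open>w \<mapsto> 1 / (2 cos t - w)\<close>\<close>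
  have "cis t * cis t + 1 = 2 * of_real (cos t) * cis t"
    by (simp add: complex_eq_iff power2_eq_square algebra_simps cos_double sin_double)
  then have "1 - cis t * (of_real (2 * cos t - e) - cis t) = cis t * of_real e"
    by (simp add: algebra_simps)
  then have "w - cis t = cis t * of_real e / (of_real (2 * cos t - e) - cis t)"
    using nz by (simp add: w_def field_simps)
  then have "(cmod (w - cis t))^2 = e^2 / N"
    by (simp add: N_def norm_mult norm_divide power_divide)
  then show "hyperbolic_quotient w (cis t) = e^2 / (sin t)^2"
    unfolding hyperbolic_quotient_def Im_w using N s by (simp add: field_simps power2_eq_square)
qed

lemma perturbation_bound:
  fixes \<sigma> c0 x s :: real
  assumes "0 \<le> \<sigma>" "\<sigma> \<le> 1" "1 \<le> c0" "\<bar>x\<bar> \<le> c0" "0 < s" "s \<le> 1"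
  defines "Q \<equiv> (\<sigma> * x)^2 / s^2" and "B \<equiv> \<sigma> * c0^2 / s^2"
  shows "sqrt (Q + Q^2 / 4) \<le> sqrt 5 / 2 * B"
proof -
  have "x^2 \<le> c0^2" using assms(3,4) by (simp add: abs_le_square_iff[symmetric])
  then have "(\<sigma> * x)^2 \<le> \<sigma>^2 * c0^2" by (simp add: power_mult_distrib mult_left_mono)
  then have Q_le: "Q \<le> \<sigma>^2 * c0^2 / s^2" by (simp add: Q_def divide_right_mono)
  have "\<sigma>^2 * c0^2 \<le> \<sigma> * c0^2"
    using assms(1,2) by (simp add: power2_eq_square mult_right_le_one_le mult_right_mono)
  then have "\<sigma>^2 * c0^2 / s^2 \<le> B" by (simp add: B_def divide_right_mono)
  with Q_le have QB: "Q \<le> B" by (rule order_trans)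
  have "1 \<le> c0^2 / s^2" using assms(3,5,6) by (simp add: power_mono one_le_power)
  then have "\<sigma>^2 * c0^2 / s^2 \<le> \<sigma>^2 * c0^2 / s^2 * (c0^2 / s^2)"
    using mult_left_mono[of 1 "c0^2 / s^2" "\<sigma>^2 * c0^2 / s^2"] by simp
  also have "\<dots> = B^2" by (simp add: B_def power2_eq_square)
  finally have QB2: "Q \<le> B^2" using Q_le by (rule order_trans[rotated])
  have "0 \<le> Q" by (simp add: Q_def)
  then have "Q^2 \<le> B^2" using QB by (simp add: power_mono)
  moreover have "(sqrt 5 / 2 * B)^2 = 5 / 4 * B^2" by (simp add: power_mult_distrib power_divide)
  ultimately have "Q + Q^2 / 4 \<le> (sqrt 5 / 2 * B)^2" using QB2 by simp
  moreover have "0 \<le> B" using assms(1) by (simp add: B_def)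
  ultimately show ?thesis by (intro real_le_lsqrt) simp_all
qed

theorem mainTheorem4:
  fixes \<theta> \<sigma> c0 :: real and \<omega> :: "nat \<Rightarrow> real" and k :: nat
  assumes "0 < \<theta>" and "\<theta> < pi"
    and "0 \<le> \<sigma>" and "\<sigma> \<le> 1"
    and "1 \<le> c0"
    and "\<forall>i\<ge>1. \<bar>\<omega> i\<bar> \<le> c0"
  shows "\<bar>Xk \<theta> \<sigma> \<omega> (Suc k) - Xk \<theta> \<sigma> \<omega> k\<bar> / Yk \<theta> \<sigma> \<omega> k
           \<le> sqrt 5 / 2 * (\<sigma> * c0 ^ 2 / (sin \<theta>) ^ 2)"
proof -
  define A where "A = matrix_inv (Wmat \<theta> \<sigma> \<omega> k)"
  define w where "w = 1 / (of_real (2 * cos \<theta> - \<sigma> * \<omega> (Suc k)) - cis \<theta>)"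
  have s: "0 < sin \<theta>" using assms(1,2) by (rule sin_gt_zero)
  have detA: "det A = 1" by (simp add: A_def invertible_det_one det_Wmat)
  note w = transfer_step_of_cis[OF assms(1,2), of "\<sigma> * \<omega> (Suc k)", folded w_def]
  have Z: "Zpt \<theta> \<sigma> \<omega> (Suc k) = mobius A w" "Zpt \<theta> \<sigma> \<omega> k = mobius A (cis \<theta>)"
    using Zpt_Suc[of \<theta>] s by (simp_all add: A_def w_def Zpt_def)
  have Y: "Yk \<theta> \<sigma> \<omega> k > 0" using detA s by (simp add: Yk_def Z Im_mobius_pos)
  have "\<bar>Xk \<theta> \<sigma> \<omega> (Suc k) - Xk \<theta> \<sigma> \<omega> k\<bar>
          \<le> Yk \<theta> \<sigma> \<omega> k * sqrt (hyperbolic_quotient w (cis \<theta>) + (hyperbolic_quotient w (cis \<theta>))^2 / 4)"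
    using abs_Re_diff_le[of "mobius A w" "mobius A (cis \<theta>)"] hyperbolic_quotient_mobius[of A w "cis \<theta>"]
      w(1) s detA by (simp add: Xk_def Yk_def Z Im_mobius_pos)
  also have "\<dots> \<le> Yk \<theta> \<sigma> \<omega> k * (sqrt 5 / 2 * (\<sigma> * c0 ^ 2 / (sin \<theta>) ^ 2))"
  proof (rule mult_left_mono)
    have "\<bar>\<omega> (Suc k)\<bar> \<le> c0" using assms(6) by simp
    then show "sqrt (hyperbolic_quotient w (cis \<theta>) + (hyperbolic_quotient w (cis \<theta>))^2 / 4)
                 \<le> sqrt 5 / 2 * (\<sigma> * c0 ^ 2 / (sin \<theta>) ^ 2)"
      unfolding w(2) by (rule perturbation_bound[OF assms(3-5) _ s sin_le_one])
  qed (use Y in simp)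
  finally show ?thesis using Y by (simp add: divide_le_eq mult.commute)
qed

end
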